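(* Let $g$ be a function from strict partitions to $\mathbb{C}$ and let $\mu$ be a strict partition. Then for every $n\ge0$, $$\sum_{|\lambda/\mu|=n}2^{|\lambda|-|\mu|-\ell(\lambda)+\ell(\mu)}f_{\lambda/\mu}\,g(\lambda)=\sum_{k=0}^n\binom{n}{k}D^kg(\mu)$$ and $$D^ng(\mu)=\sum_{k=0}^n(-1)^{n+k}\binom{n}{k}\sum_{|\lambda/\mu|=k}2^{|\lambda|-|\mu|-\ell(\lambda)+\ell(\mu)}f_{\lambda/\mu}\,g(\lambda),$$ where $\sum_{|\lambda/\mu|=k}$ ranges over strict partitions $\lambda\supseteq\mu$ with $|\lambda|-|\mu|=k$. In particular, if there is a positive integer $r$ such that $D^rg(\lambda)=0$ for every strict partition $\lambda$, then the left-hand side of the first identity is a polynomial in $n$ of degree at most $r-1$.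
   Context: A strict partition is a finite strictly decreasing sequence of positive integers $\lambda=(\lambda_1>\cdots>\lambda_\ell)$ (the empty sequence is allowed); $|\lambda|=\sum_i\lambda_i$, $\ell(\lambda)=\ell$, and $\lambda_i=0$ for $i>\ell(\lambda)$. The (shifted Young) diagram of $\lambda$ is the set of boxes $(i,j)$ with $1\le i\le\ell(\lambda)$, $i+1\le j\le i+\lambda_i$; $\lambda$ is identified with its diagram. Write $\lambda\supseteq\mu$ if $\lambda_i\ge\mu_i$ for all $i$; $\lambda/\mu$ is the set of boxes of $\lambda$ not in $\mu$, and $|\lambda/\mu|=|\lambda|-|\mu|$. $f_{\lambda/\mu}$ is the number of standard shifted Young tableaux of shape $\lambda/\mu$, i.e. bijective fillings of the boxes of $\lambda/\mu$ with $1,\dots,|\lambda/\mu|$ increasing from left to right along rows and from top to bottom along columns ($f_{\mu/\mu}=1$). For a strict partition $\lambda$, $\lambda^+$ denotes any strict partition obtained from $\lambda$ by adding one box. The difference operator is $$Dg(\lambda)=\sum_{\lambda^+:\ \ell(\lambda^+)>\ell(\lambda)}g(\lambda^+)+2\sum_{\lambda^+:\ \ell(\lambda^+)=\ell(\lambda)}g(\lambda^+)-g(\lambda),$$ and $D^k$ is its $k$-th iterate ($D^0g=g$). *)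

theory Defs
  imports Complex_Main "HOL-Computational_Algebra.Polynomial"
begin

text \<open>Strict partitions are represented as lists of naturals, strictly decreasing,
  with all parts positive. The list entry xs!(i-1) is the part lambda_i (1-indexed).\<close>

definition strict_part :: "nat list \<Rightarrow> bool" where
  "strict_part xs \<longleftrightarrow> sorted_wrt (>) xs \<and> 0 \<notin> set xs"

definition part :: "nat list \<Rightarrow> nat \<Rightarrow> nat" where
  "part xs i = (if 1 \<le> i \<and> i \<le> length xs then xs ! (i - 1) else 0)"

definition psize :: "nat list \<Rightarrow> nat" where
  "psize xs = sum_list xs"

definition contains :: "nat list \<Rightarrow> nat list \<Rightarrow> bool" where
  "contains lam mu \<longleftrightarrow> (\<forall>i. part mu i \<le> part lam i)"

definition shifted_diagram :: "nat list \<Rightarrow> (nat \<times> nat) set" where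
  "shifted_diagram lam =
     {(i, j). 1 \<le> i \<and> i \<le> length lam \<and> i + 1 \<le> j \<and> j \<le> i + part lam i}"

definition skew_diagram :: "nat list \<Rightarrow> nat list \<Rightarrow> (nat \<times> nat) set" where
  "skew_diagram lam mu = shifted_diagram lam - shifted_diagram mu"

definition skew_tableaux :: "nat list \<Rightarrow> nat list \<Rightarrow> ((nat \<times> nat) \<Rightarrow> nat) set" where
  "skew_tableaux lam mu =
     {T. bij_betw T (skew_diagram lam mu) {1..psize lam - psize mu}
       \<and> (\<forall>x. x \<notin> skew_diagram lam mu \<longrightarrow> T x = 0)
       \<and> (\<forall>i j j'. (i, j) \<in> skew_diagram lam mu \<longrightarrow> (i, j') \<in> skew_diagram lam mu
              \<longrightarrow> j < j' \<longrightarrow> T (i, j) < T (i, j'))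
       \<and> (\<forall>i i' j. (i, j) \<in> skew_diagram lam mu \<longrightarrow> (i', j) \<in> skew_diagram lam mu
              \<longrightarrow> i < i' \<longrightarrow> T (i, j) < T (i', j))}"

definition f_skew :: "nat list \<Rightarrow> nat list \<Rightarrow> nat" where
  "f_skew lam mu = card (skew_tableaux lam mu)"

definition plus_one :: "nat list \<Rightarrow> nat list set" where
  "plus_one lam = {nu. strict_part nu \<and> contains nu lam \<and> psize nu = psize lam + 1}"

definition Dop :: "(nat list \<Rightarrow> complex) \<Rightarrow> nat list \<Rightarrow> complex" where
  "Dop g lam =
     (\<Sum>nu\<in>{nu \<in> plus_one lam. length nu > length lam}. g nu)
     + 2 * (\<Sum>nu\<in>{nu \<in> plus_one lam. length nu = length lam}. g nu)
     - g lam"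

definition skew_set :: "nat list \<Rightarrow> nat \<Rightarrow> nat list set" where
  "skew_set mu n = {lam. strict_part lam \<and> contains lam mu \<and> psize lam = psize mu + n}"

definition weighted_sum :: "(nat list \<Rightarrow> complex) \<Rightarrow> nat list \<Rightarrow> nat \<Rightarrow> complex" where
  "weighted_sum g mu n =
     (\<Sum>lam\<in>skew_set mu n.
        (2::complex) powi (int (psize lam) - int (psize mu) - int (length lam) + int (length mu))
        * of_nat (f_skew lam mu) * g lam)"

end

theory Submission
  imports Defs
begin

text \<open>Write \<open>W\<^sub>n(\<mu>)\<close> for the left-hand side of the first identity. In a standard shifted
  tableau of shape \<open>\<lambda>/\<mu>\<close> the entry \<open>1\<close> sits in a box that can be added to \<open>\<mu>\<close>; removing it
  and lowering the other entries by one is a bijection onto the tableaux of the shapes \<open>\<lambda>/\<nu>\<close>,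
  \<open>\<nu> = \<mu>\<^sup>+\<close>. Together with the multiplicativity of the powers of \<open>2\<close> this gives
  \<open>W\<^sub>n\<^sub>+\<^sub>1(\<mu>) = \<Sum> w(\<nu>/\<mu>) W\<^sub>n(\<nu>)\<close>, where the weight \<open>w(\<nu>/\<mu>)\<close> is \<open>1\<close> if \<open>\<nu>\<close> has a new row
  and \<open>2\<close> otherwise: these are exactly the coefficients of \<open>E = D + 1\<close>. Hence \<open>W\<^sub>n = E\<^sup>n g\<close>,
  and both identities are the binomial expansions of \<open>(D + 1)\<^sup>n\<close> and \<open>(E - 1)\<^sup>n\<close>. If
  \<open>D\<^sup>r g = 0\<close>, the first expansion only involves \<open>n choose k\<close> for \<open>k < r\<close>, which are polynomials
  in \<open>n\<close> of degree \<open>< r\<close>.\<close>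

section \<open>Shifted diagrams and adding a box\<close>

lemma strict_part_nonzero: "strict_part xs \<Longrightarrow> 0 \<notin> set xs"
  by (simp add: strict_part_def)

lemma part_pos_iff: "0 \<notin> set xs \<Longrightarrow> 0 < part xs i \<longleftrightarrow> 1 \<le> i \<and> i \<le> length xs"
proof (cases "1 \<le> i \<and> i \<le> length xs")
  case True
  then have "xs ! (i - 1) \<in> set xs" by (intro nth_mem) auto
  moreover assume "0 \<notin> set xs"
  ultimately show ?thesis
    using True by (auto simp: part_def intro: Nat.gr0I)
qed (auto simp: part_def)

lemma part_eq_nth: "i < length xs \<Longrightarrow> part xs (Suc i) = xs ! i"
  by (simp add: part_def)

lemma part_inject:
  assumes "0 \<notin> set xs" "0 \<notin> set ys" "\<And>i. part xs i = part ys i"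
  shows "xs = ys"
proof -
  have "length ys \<le> length xs" if "0 \<notin> set xs" "0 \<notin> set ys" "\<And>i. part xs i = part ys i"
    for xs ys :: "nat list"
    using that part_pos_iff[of ys "length ys"] part_pos_iff[of xs "length ys"]
    by (cases "ys = []") auto
  then have "length xs = length ys"
    using assms by (metis le_antisym)
  then show ?thesis
    by (metis assms(3) nth_equalityI part_eq_nth)
qed

lemma mem_shifted_diagram:
  "0 \<notin> set xs \<Longrightarrow> (i, j) \<in> shifted_diagram xs \<longleftrightarrow> 1 \<le> i \<and> i + 1 \<le> j \<and> j \<le> i + part xs i"
  unfolding shifted_diagram_def using part_pos_iff[of xs i] by auto

lemma shifted_diagram_Sigma: "shifted_diagram xs = (SIGMA i:{1..length xs}. {i+1..i + part xs i})"
  unfolding shifted_diagram_def by auto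

lemma finite_shifted_diagram [simp]: "finite (shifted_diagram xs)"
  by (simp add: shifted_diagram_Sigma)

lemma card_shifted_diagram: "card (shifted_diagram xs) = psize xs"
proof -
  have "card (shifted_diagram xs) = (\<Sum>i\<in>Suc ` {..<length xs}. part xs i)"
    by (simp add: shifted_diagram_Sigma card_SigmaI image_Suc_lessThan)
  also have "\<dots> = (\<Sum>i<length xs. xs ! i)"
    by (simp add: sum.reindex part_eq_nth)
  finally show ?thesis
    by (simp add: psize_def sum_list_sum_nth atLeast0LessThan)
qed

lemma contains_iff_shifted_diagram_subset:
  assumes "0 \<notin> set lam" "0 \<notin> set mu"
  shows "contains lam mu \<longleftrightarrow> shifted_diagram mu \<subseteq> shifted_diagram lam"
proof
  assume "contains lam mu"
  then show "shifted_diagram mu \<subseteq> shifted_diagram lam"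
  proof (intro subrelI)
    fix i j assume "(i, j) \<in> shifted_diagram mu"
    moreover have "part mu i \<le> part lam i"
      using \<open>contains lam mu\<close> by (simp add: contains_def)
    ultimately show "(i, j) \<in> shifted_diagram lam"
      using assms by (auto simp: mem_shifted_diagram)
  qed
next
  assume sub: "shifted_diagram mu \<subseteq> shifted_diagram lam"
  have "part mu i \<le> part lam i" for i
  proof (cases "part mu i = 0")
    case False
    then have "1 \<le> i" using part_pos_iff[OF assms(2), of i] by simp
    with False have "(i, i + part mu i) \<in> shifted_diagram mu"
      using assms(2) by (simp add: mem_shifted_diagram)
    with sub assms(1) show ?thesis by (auto simp: mem_shifted_diagram)
  qed simp
  then show "contains lam mu" by (simp add: contains_def)
qed

lemma shifted_diagram_inject:
  assumes "0 \<notin> set xs" "0 \<notin> set ys" "shifted_diagram xs = shifted_diagram ys"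
  shows "xs = ys"
proof (rule part_inject[OF assms(1,2)])
  fix i
  have "contains xs ys" "contains ys xs"
    using assms contains_iff_shifted_diagram_subset by auto
  then show "part xs i = part ys i"
    unfolding contains_def by (meson le_antisym)
qed

lemma part_Suc_less:
  "strict_part xs \<Longrightarrow> 1 \<le> k \<Longrightarrow> k < length xs \<Longrightarrow> part xs (Suc k) < part xs k"
  unfolding strict_part_def part_def by (auto simp: sorted_wrt_iff_nth_less)

lemma part_Suc_le:
  assumes "strict_part xs" "1 \<le> k"
  shows "part xs (Suc k) \<le> part xs k"
proof (cases "k < length xs")
  case True
  then show ?thesis using part_Suc_less[OF assms] by simp
qed (simp add: part_def)

lemma part_gap:
  assumes "strict_part xs" "1 \<le> a" "a \<le> b" "b \<le> length xs"
  shows "part xs b + (b - a) \<le> part xs a"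
  using assms(3,4)
proof (induction b rule: dec_induct)
  case (step n)
  then show ?case
    using part_Suc_less[OF assms(1), of n] assms(2) by auto
qed simp

lemma strict_partI:
  assumes "\<And>k. 1 \<le> k \<Longrightarrow> k \<le> length xs \<Longrightarrow> 0 < part xs k"
    and "\<And>k. 1 \<le> k \<Longrightarrow> k < length xs \<Longrightarrow> part xs (Suc k) < part xs k"
  shows "strict_part xs"
proof -
  have "sorted_wrt (>) xs"
  proof (subst sorted_wrt_iff_nth_Suc_transp)
    show "\<forall>i. Suc i < length xs \<longrightarrow> xs ! Suc i < xs ! i"
    proof (intro allI impI)
      fix i assume "Suc i < length xs"
      then show "xs ! Suc i < xs ! i"
        using assms(2)[of "Suc i"] by (simp add: part_def)
    qed
  qed (auto intro: transpI)
  moreover have "0 \<notin> set xs"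
  proof
    assume "0 \<in> set xs"
    then obtain i where "i < length xs" "xs ! i = 0"
      by (auto simp: in_set_conv_nth)
    with assms(1)[of "Suc i"] show False by (simp add: part_def)
  qed
  ultimately show ?thesis
    by (simp add: strict_part_def)
qed

lemma shifted_diagram_row_closed:
  "0 \<notin> set xs \<Longrightarrow> (i, j) \<in> shifted_diagram xs \<Longrightarrow> i + 1 \<le> j' \<Longrightarrow> j' \<le> j
    \<Longrightarrow> (i, j') \<in> shifted_diagram xs"
  by (auto simp: mem_shifted_diagram)

lemma shifted_diagram_column_closed:
  assumes "strict_part xs" "(i, j) \<in> shifted_diagram xs" "1 \<le> i'" "i' \<le> i" "i' + 1 \<le> j"
  shows "(i', j) \<in> shifted_diagram xs"
proof -
  note nz = strict_part_nonzero[OF assms(1)]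
  have "j \<le> i + part xs i" "0 < part xs i"
    using assms(2) nz by (auto simp: mem_shifted_diagram)
  then have "part xs i + (i - i') \<le> part xs i'"
    using part_gap[OF assms(1,3,4)] part_pos_iff[OF nz] by auto
  with \<open>j \<le> i + part xs i\<close> show ?thesis
    using assms(3-5) nz by (auto simp: mem_shifted_diagram)
qed

definition addable_box :: "nat list \<Rightarrow> nat \<times> nat \<Rightarrow> bool" where
  "addable_box mu b \<longleftrightarrow> (case b of (i, j) \<Rightarrow>
     1 \<le> i \<and> i + 1 \<le> j \<and> (i, j) \<notin> shifted_diagram mu
     \<and> (i + 2 \<le> j \<longrightarrow> (i, j - 1) \<in> shifted_diagram mu)
     \<and> (2 \<le> i \<longrightarrow> (i - 1, j) \<in> shifted_diagram mu))"

definition add_box :: "nat list \<Rightarrow> nat \<Rightarrow> nat list" where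
  "add_box mu i = (if i \<le> length mu then mu[i - 1 := mu ! (i - 1) + 1] else mu @ [1])"

lemma length_add_box:
  "1 \<le> i \<Longrightarrow> i \<le> length mu + 1 \<Longrightarrow>
    length (add_box mu i) = (if i \<le> length mu then length mu else length mu + 1)"
  by (simp add: add_box_def)

lemma part_add_box:
  "1 \<le> i \<Longrightarrow> i \<le> length mu + 1 \<Longrightarrow>
    part (add_box mu i) k = part mu k + (if k = i then 1 else 0)"
  by (cases "i \<le> length mu") (auto simp: add_box_def part_def nth_list_update nth_append)

lemma add_box_addable:
  assumes mu: "strict_part mu" and b: "addable_box mu (i, j)"
  shows "i \<le> length mu + 1" "strict_part (add_box mu i)"
    "shifted_diagram (add_box mu i) = insert (i, j) (shifted_diagram mu)"
proof -
  note nz = strict_part_nonzero[OF mu]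
  from b have i: "1 \<le> i" and j: "i + 1 \<le> j" and out: "(i, j) \<notin> shifted_diagram mu"
    and left: "i + 2 \<le> j \<Longrightarrow> (i, j - 1) \<in> shifted_diagram mu"
    and up: "2 \<le> i \<Longrightarrow> (i - 1, j) \<in> shifted_diagram mu"
    by (auto simp: addable_box_def)
  have j_eq: "j = i + part mu i + 1"
    using out i j left nz by (cases "i + 2 \<le> j") (auto simp: mem_shifted_diagram)
  have up_gap: "part mu i + 1 < part mu (i - 1)" "i - 1 \<le> length mu" if "2 \<le> i"
  proof -
    show "part mu i + 1 < part mu (i - 1)"
      using up[OF that] j_eq nz that by (auto simp: mem_shifted_diagram)
    then show "i - 1 \<le> length mu"
      using part_pos_iff[OF nz, of "i - 1"] by auto
  qed
  show il: "i \<le> length mu + 1"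
    using up_gap i by (cases "2 \<le> i") auto
  note part_new = part_add_box[OF i il] and length_new = length_add_box[OF i il]
  show "strict_part (add_box mu i)"
  proof (rule strict_partI)
    fix k assume "1 \<le> k" "k \<le> length (add_box mu i)"
    then show "0 < part (add_box mu i) k"
      using part_pos_iff[OF nz, of k] length_new il by (auto simp: part_new split: if_splits)
  next
    fix k assume k: "1 \<le> k" "k < length (add_box mu i)"
    have "Suc k = i \<or> k < length mu"
      using k length_new il by (cases "i \<le> length mu") auto
    then consider "Suc k = i" | "k = i" | "Suc k \<noteq> i" "k \<noteq> i" "k < length mu"
      by blast
    then show "part (add_box mu i) (Suc k) < part (add_box mu i) k"
    proof cases
      case 1
      then show ?thesis using up_gap(1) k(1) by (auto simp: part_new)
    next
      case 2
      then show ?thesis using part_Suc_le[OF mu k(1)] by (simp add: part_new)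
    next
      case 3
      then show ?thesis using part_Suc_less[OF mu k(1)] by (simp add: part_new)
    qed
  qed
  then have "0 \<notin> set (add_box mu i)"
    by (rule strict_part_nonzero)
  then show "shifted_diagram (add_box mu i) = insert (i, j) (shifted_diagram mu)"
    using nz j_eq i by (auto simp: mem_shifted_diagram part_new split: if_splits)
qed

lemma plus_one_iff:
  assumes mu: "strict_part mu"
  shows "nu \<in> plus_one mu \<longleftrightarrow> strict_part nu
    \<and> (\<exists>b. addable_box mu b \<and> shifted_diagram nu = insert b (shifted_diagram mu))"
proof
  assume "nu \<in> plus_one mu"
  then have nu: "strict_part nu" and "contains nu mu" and size: "psize nu = psize mu + 1"
    by (auto simp: plus_one_def)
  note nz_mu = strict_part_nonzero[OF mu] and nz_nu = strict_part_nonzero[OF nu]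
  have sub: "shifted_diagram mu \<subseteq> shifted_diagram nu"
    using \<open>contains nu mu\<close> contains_iff_shifted_diagram_subset[OF nz_nu nz_mu] by simp
  then have "card (shifted_diagram nu - shifted_diagram mu) = 1"
    using size by (simp add: card_Diff_subset card_shifted_diagram)
  then obtain i j where "shifted_diagram nu - shifted_diagram mu = {(i, j)}"
    by (auto simp: card_1_singleton_iff)
  then have new: "shifted_diagram nu = insert (i, j) (shifted_diagram mu)"
    and out: "(i, j) \<notin> shifted_diagram mu"
    using sub by auto
  then have box: "(i, j) \<in> shifted_diagram nu"
    by simp
  then have "1 \<le> i" "i + 1 \<le> j"
    using nz_nu by (auto simp: mem_shifted_diagram)
  have "(i, j - 1) \<in> shifted_diagram mu" if "i + 2 \<le> j"
  proof -
    have "(i, j - 1) \<in> shifted_diagram nu"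
      using shifted_diagram_row_closed[OF nz_nu box, of "j - 1"] that by simp
    with new that show ?thesis by auto
  qed
  moreover have "(i - 1, j) \<in> shifted_diagram mu" if "2 \<le> i"
  proof -
    have "(i - 1, j) \<in> shifted_diagram nu"
      using shifted_diagram_column_closed[OF nu box, of "i - 1"] that \<open>i + 1 \<le> j\<close> by simp
    with new that show ?thesis by auto
  qed
  ultimately have "addable_box mu (i, j)"
    using out \<open>1 \<le> i\<close> \<open>i + 1 \<le> j\<close> by (simp add: addable_box_def)
  with nu new show "strict_part nu
    \<and> (\<exists>b. addable_box mu b \<and> shifted_diagram nu = insert b (shifted_diagram mu))"
    by blast
next
  assume "strict_part nu
    \<and> (\<exists>b. addable_box mu b \<and> shifted_diagram nu = insert b (shifted_diagram mu))"
  then obtain b where nu: "strict_part nu" and "addable_box mu b"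
    and new: "shifted_diagram nu = insert b (shifted_diagram mu)"
    by blast
  then have "b \<notin> shifted_diagram mu"
    by (auto simp: addable_box_def)
  then have "psize nu = psize mu + 1"
    using new card_shifted_diagram[of nu] card_shifted_diagram[of mu] by simp
  moreover have "contains nu mu"
    using new contains_iff_shifted_diagram_subset[OF strict_part_nonzero[OF nu]
        strict_part_nonzero[OF mu]] by auto
  ultimately show "nu \<in> plus_one mu"
    using nu by (simp add: plus_one_def)
qed

lemma plus_one_length:
  assumes mu: "strict_part mu" and "nu \<in> plus_one mu"
  shows "length nu = length mu \<or> length nu = length mu + 1"
proof -
  obtain i j where nu: "strict_part nu" and b: "addable_box mu (i, j)"
    and new: "shifted_diagram nu = insert (i, j) (shifted_diagram mu)"
    using assms(2) unfolding plus_one_iff[OF mu] by auto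
  have "nu = add_box mu i"
  proof (rule shifted_diagram_inject)
    show "shifted_diagram nu = shifted_diagram (add_box mu i)"
      using new add_box_addable(3)[OF mu b] by simp
  qed (use strict_part_nonzero nu add_box_addable(2)[OF mu b] in auto)
  moreover have "1 \<le> i"
    using b by (simp add: addable_box_def)
  ultimately show ?thesis
    using length_add_box[of i mu] add_box_addable(1)[OF mu b] by simp
qed

section \<open>Standard fillings of a finite set of boxes\<close>

definition standard_fillings :: "(nat \<times> nat) set \<Rightarrow> (nat \<times> nat \<Rightarrow> nat) set" where
  "standard_fillings S =
     {T. bij_betw T S {1..card S} \<and> (\<forall>x. x \<notin> S \<longrightarrow> T x = 0)
       \<and> (\<forall>i j j'. (i, j) \<in> S \<longrightarrow> (i, j') \<in> S \<longrightarrow> j < j' \<longrightarrow> T (i, j) < T (i, j'))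
       \<and> (\<forall>i i' j. (i, j) \<in> S \<longrightarrow> (i', j) \<in> S \<longrightarrow> i < i' \<longrightarrow> T (i, j) < T (i', j))}"

definition min_boxes :: "(nat \<times> nat) set \<Rightarrow> (nat \<times> nat) set" where
  "min_boxes S = {(i, j) \<in> S. (\<forall>j' < j. (i, j') \<notin> S) \<and> (\<forall>i' < i. (i', j) \<notin> S)}"

lemma min_boxes_subset: "min_boxes S \<subseteq> S"
  by (auto simp: min_boxes_def)

lemma finite_standard_fillings: "finite S \<Longrightarrow> finite (standard_fillings S)"
  by (rule finite_subset[OF _ finite_set_of_finite_funs[of S "{1..card S}" 0]])
    (auto simp: standard_fillings_def bij_betw_def)

lemma standard_filling_pos: "T \<in> standard_fillings S \<Longrightarrow> x \<in> S \<Longrightarrow> 1 \<le> T x"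
  by (fastforce simp: standard_fillings_def bij_betw_def)

lemma standard_filling_outside: "T \<in> standard_fillings S \<Longrightarrow> x \<notin> S \<Longrightarrow> T x = 0"
  unfolding standard_fillings_def by blast

lemma standard_filling_remove_min:
  assumes T: "T \<in> standard_fillings S" and b: "b \<in> S" "T b = 1"
  shows "b \<in> min_boxes S" "(\<lambda>x. T x - 1) \<in> standard_fillings (S - {b})"
proof -
  have pos: "\<And>x. x \<in> S \<Longrightarrow> 1 \<le> T x"
    using T by (rule standard_filling_pos)
  have bij: "bij_betw T S {1..card S}" and out: "\<And>x. x \<notin> S \<Longrightarrow> T x = 0"
    and row: "\<And>i j j'. (i, j) \<in> S \<Longrightarrow> (i, j') \<in> S \<Longrightarrow> j < j' \<Longrightarrow> T (i, j) < T (i, j')"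
    and col: "\<And>i i' j. (i, j) \<in> S \<Longrightarrow> (i', j) \<in> S \<Longrightarrow> i < i' \<Longrightarrow> T (i, j) < T (i', j)"
    using T by (auto simp: standard_fillings_def)
  show "b \<in> min_boxes S"
    using b pos row col by (fastforce simp: min_boxes_def)
  have "T b \<in> {1..card S}"
    using bij_betwE[OF bij] b(1) by blast
  then have "1 \<le> card S"
    by simp
  then have card: "card (S - {b}) = card S - 1"
    using b by (simp add: card_ge_0_finite)
  have "bij_betw T (S - {b}) ({1..card S} - {1})"
    using bij b \<open>1 \<le> card S\<close> by (intro bij_betw_DiffI) auto
  moreover have "bij_betw (\<lambda>k. k - 1) ({1..card S} - {1}) {1..card S - 1}"
    by (rule bij_betw_byWitness[where f' = Suc]) auto
  ultimately have "bij_betw (\<lambda>x. T x - 1) (S - {b}) {1..card (S - {b})}"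
    unfolding card by (auto dest: bij_betw_trans simp: comp_def)
  moreover have "T x - 1 = 0" if "x \<notin> S - {b}" for x
    using that b out by (cases "x = b") auto
  moreover have "T (i, j) - 1 < T (i, j') - 1"
    if "(i, j) \<in> S - {b}" "(i, j') \<in> S - {b}" "j < j'" for i j j'
    using that row[of i j j'] pos[of "(i, j)"] by auto
  moreover have "T (i, j) - 1 < T (i', j) - 1"
    if "(i, j) \<in> S - {b}" "(i', j) \<in> S - {b}" "i < i'" for i i' j
    using that col[of i j i'] pos[of "(i, j)"] by auto
  ultimately show "(\<lambda>x. T x - 1) \<in> standard_fillings (S - {b})"
    by (simp add: standard_fillings_def)
qed

lemma standard_filling_insert_min:
  assumes S: "finite S" and b: "b \<in> min_boxes S" and T: "T \<in> standard_fillings (S - {b})"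
  shows "(\<lambda>x. if x \<in> S then T x + 1 else 0) \<in> standard_fillings S"
    (is "?U \<in> _")
proof -
  have bS: "b \<in> S" and left: "\<And>j'. j' < snd b \<Longrightarrow> (fst b, j') \<notin> S"
    and up: "\<And>i'. i' < fst b \<Longrightarrow> (i', snd b) \<notin> S"
    using b by (auto simp: min_boxes_def)
  have pos: "\<And>x. x \<in> S - {b} \<Longrightarrow> 1 \<le> T x"
    using T by (rule standard_filling_pos)
  have bij: "bij_betw T (S - {b}) {1..card (S - {b})}"
    and out: "\<And>x. x \<notin> S - {b} \<Longrightarrow> T x = 0"
    and row: "\<And>i j j'. (i, j) \<in> S - {b} \<Longrightarrow> (i, j') \<in> S - {b} \<Longrightarrow> j < j' \<Longrightarrow> T (i, j) < T (i, j')"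
    and col: "\<And>i i' j. (i, j) \<in> S - {b} \<Longrightarrow> (i', j) \<in> S - {b} \<Longrightarrow> i < i' \<Longrightarrow> T (i, j) < T (i', j)"
    using T by (auto simp: standard_fillings_def)
  have card: "card S = Suc (card (S - {b}))"
    using S bS by (rule card_Suc_Diff1[symmetric])
  have "bij_betw (Suc \<circ> T) (S - {b}) (Suc ` {1..card (S - {b})})"
    using bij by (rule bij_betw_trans) simp
  moreover have "bij_betw ?U (S - {b}) X \<longleftrightarrow> bij_betw (Suc \<circ> T) (S - {b}) X" for X
    by (rule bij_betw_cong) simp
  ultimately have "bij_betw ?U (S - {b}) {2..card S}"
    by (simp add: card image_Suc_atLeastAtMost numeral_2_eq_2)
  then have "bij_betw ?U ((S - {b}) \<union> {b}) ({2..card S} \<union> {?U b})"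
    by (rule notIn_Un_bij_betw[rotated 2]) (use bS out in auto)
  moreover have "(S - {b}) \<union> {b} = S" "{2..card S} \<union> {?U b} = {1..card S}"
    using bS out[of b] card by auto
  ultimately have "bij_betw ?U S {1..card S}"
    by simp
  moreover have "?U (i, j) < ?U (i, j')" if "(i, j) \<in> S" "(i, j') \<in> S" "j < j'" for i j j'
  proof -
    have "(i, j') \<noteq> b"
      using left[of j] that by auto
    then show ?thesis
      using that row[of i j j'] out[of b] pos[of "(i, j')"] by (cases "(i, j) = b") auto
  qed
  moreover have "?U (i, j) < ?U (i', j)" if "(i, j) \<in> S" "(i', j) \<in> S" "i < i'" for i i' j
  proof -
    have "(i', j) \<noteq> b"
      using up[of i] that by auto
    then show ?thesis
      using that col[of i j i'] out[of b] pos[of "(i', j)"] by (cases "(i, j) = b") auto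
  qed
  ultimately show ?thesis
    by (simp add: standard_fillings_def)
qed

lemma standard_filling_insert_min_inject:
  assumes S: "finite S" and b: "b \<in> min_boxes S" "T \<in> standard_fillings (S - {b})"
    and c: "c \<in> min_boxes S" "U \<in> standard_fillings (S - {c})"
    and eq: "(\<lambda>x. if x \<in> S then T x + 1 else 0) = (\<lambda>x. if x \<in> S then U x + 1 else 0)"
      (is "?T = ?U")
  shows "b = c" "T = U"
proof -
  have "inj_on ?T S"
    using standard_filling_insert_min[OF S b] by (simp add: standard_fillings_def bij_betw_def)
  moreover have "?T b = ?T c" "b \<in> S" "c \<in> S"
    using b c eq min_boxes_subset standard_filling_outside[of T "S - {b}" b]
      standard_filling_outside[of U "S - {c}" c]
    by (auto dest: fun_cong[where x = c])
  ultimately show "b = c"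
    by (rule inj_onD)
  show "T = U"
  proof
    fix x
    show "T x = U x"
    proof (cases "x \<in> S - {b}")
      case True
      then show ?thesis using fun_cong[OF eq, of x] by simp
    next
      case False
      then show ?thesis
        using b c \<open>b = c\<close> by (simp add: standard_filling_outside)
    qed
  qed
qed

text \<open>The box filled with \<open>1\<close> is a minimal box; removing it and decreasing all other entries
  by one is a bijection onto the standard fillings of the remaining boxes.\<close>
lemma card_standard_fillings_min_boxes:
  assumes S: "finite S" "S \<noteq> {}"
  shows "card (standard_fillings S) = (\<Sum>b\<in>min_boxes S. card (standard_fillings (S - {b})))"
proof -
  define F where "F = (\<lambda>(b::nat \<times> nat, T). \<lambda>x. if x \<in> S then T x + 1 else (0::nat))"
  let ?P = "SIGMA b:min_boxes S. standard_fillings (S - {b})"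
  have "inj_on F ?P"
    using standard_filling_insert_min_inject[OF S(1)] by (auto simp: F_def intro!: inj_onI)
  moreover have "F ` ?P = standard_fillings S"
  proof (intro subset_antisym subsetI)
    fix T assume T: "T \<in> standard_fillings S"
    then have "1 \<in> T ` S"
      using S by (auto simp: standard_fillings_def bij_betw_def card_gt_0_iff Suc_le_eq)
    then obtain b where b: "b \<in> S" "T b = 1"
      by auto
    have "F (b, \<lambda>x. T x - 1) = T"
      using standard_filling_pos[OF T] standard_filling_outside[OF T]
      by (intro ext) (fastforce simp: F_def)
    moreover have "(b, \<lambda>x. T x - 1) \<in> ?P"
      using standard_filling_remove_min[OF T b] by simp
    ultimately show "T \<in> F ` ?P"
      by (metis image_eqI)
  qed (use standard_filling_insert_min[OF S(1)] in \<open>auto simp: F_def\<close>)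
  ultimately have "card (standard_fillings S) = card ?P"
    by (metis card_image)
  also have "\<dots> = (\<Sum>b\<in>min_boxes S. card (standard_fillings (S - {b})))"
    using S finite_subset[OF min_boxes_subset]
    by (intro card_SigmaI) (auto simp: finite_standard_fillings)
  finally show ?thesis .
qed

section \<open>Removing the entry 1 from a skew shifted tableau\<close>

lemma skew_tableaux_eq_standard_fillings:
  assumes "shifted_diagram mu \<subseteq> shifted_diagram lam"
  shows "skew_tableaux lam mu = standard_fillings (skew_diagram lam mu)"
proof -
  have "card (skew_diagram lam mu) = psize lam - psize mu"
    using assms by (simp add: skew_diagram_def card_Diff_subset card_shifted_diagram)
  then show ?thesis
    by (simp add: skew_tableaux_def standard_fillings_def)
qed

lemma min_boxes_skew_diagram_iff:
  assumes lam: "strict_part lam" and mu: "strict_part mu"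
    and sub: "shifted_diagram mu \<subseteq> shifted_diagram lam"
  shows "(i, j) \<in> min_boxes (skew_diagram lam mu)
    \<longleftrightarrow> (i, j) \<in> shifted_diagram lam \<and> addable_box mu (i, j)"
proof
  note nz_lam = strict_part_nonzero[OF lam]
  assume min: "(i, j) \<in> min_boxes (skew_diagram lam mu)"
  then have box: "(i, j) \<in> shifted_diagram lam" "(i, j) \<notin> shifted_diagram mu"
    by (auto simp: min_boxes_def skew_diagram_def)
  then have "1 \<le> i" "i + 1 \<le> j"
    using nz_lam by (auto simp: mem_shifted_diagram)
  have "(i, j - 1) \<in> shifted_diagram mu" if "i + 2 \<le> j"
    using min shifted_diagram_row_closed[OF nz_lam box(1), of "j - 1"] that
    by (auto simp: min_boxes_def skew_diagram_def)
  moreover have "(i - 1, j) \<in> shifted_diagram mu" if "2 \<le> i"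
    using min shifted_diagram_column_closed[OF lam box(1), of "i - 1"] that \<open>i + 1 \<le> j\<close>
    by (auto simp: min_boxes_def skew_diagram_def)
  ultimately show "(i, j) \<in> shifted_diagram lam \<and> addable_box mu (i, j)"
    using box \<open>1 \<le> i\<close> \<open>i + 1 \<le> j\<close> by (simp add: addable_box_def)
next
  note nz_lam = strict_part_nonzero[OF lam] and nz_mu = strict_part_nonzero[OF mu]
  assume "(i, j) \<in> shifted_diagram lam \<and> addable_box mu (i, j)"
  then have box: "(i, j) \<in> shifted_diagram lam" and "(i, j) \<notin> shifted_diagram mu"
    and left: "i + 2 \<le> j \<Longrightarrow> (i, j - 1) \<in> shifted_diagram mu"
    and up: "2 \<le> i \<Longrightarrow> (i - 1, j) \<in> shifted_diagram mu"
    by (auto simp: addable_box_def)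
  have "(i, j') \<in> shifted_diagram mu" if "(i, j') \<in> shifted_diagram lam" "j' < j" for j'
  proof -
    have "i + 1 \<le> j'"
      using that nz_lam by (simp add: mem_shifted_diagram)
    then show ?thesis
      using shifted_diagram_row_closed[OF nz_mu left, of j'] that by simp
  qed
  moreover have "(i', j) \<in> shifted_diagram mu" if "(i', j) \<in> shifted_diagram lam" "i' < i" for i'
  proof -
    have "1 \<le> i'" "i' + 1 \<le> j"
      using that nz_lam by (simp_all add: mem_shifted_diagram)
    then show ?thesis
      using shifted_diagram_column_closed[OF mu up, of i'] that by simp
  qed
  ultimately show "(i, j) \<in> min_boxes (skew_diagram lam mu)"
    using box \<open>(i, j) \<notin> shifted_diagram mu\<close> by (auto simp: min_boxes_def skew_diagram_def)
qed

lemma add_min_box_skew_diagram: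
  assumes lam: "strict_part lam" and mu: "strict_part mu"
    and sub: "shifted_diagram mu \<subseteq> shifted_diagram lam"
    and b: "b \<in> min_boxes (skew_diagram lam mu)"
  defines "nu \<equiv> add_box mu (fst b)"
  shows "shifted_diagram nu = insert b (shifted_diagram mu)"
    and "nu \<in> plus_one mu" "contains lam nu"
    and "skew_diagram lam nu = skew_diagram lam mu - {b}"
proof -
  obtain i j where ij: "b = (i, j)"
    by (cases b)
  have "(i, j) \<in> shifted_diagram lam" and addable: "addable_box mu (i, j)"
    using b min_boxes_skew_diagram_iff[OF lam mu sub] ij by auto
  note new = add_box_addable[OF mu addable]
  show diagram: "shifted_diagram nu = insert b (shifted_diagram mu)"
    using new ij by (simp add: nu_def)
  show "nu \<in> plus_one mu"
    using new ij addable plus_one_iff[OF mu] by (auto simp: nu_def)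
  show "contains lam nu"
    using diagram sub \<open>(i, j) \<in> shifted_diagram lam\<close> ij
      contains_iff_shifted_diagram_subset[OF strict_part_nonzero[OF lam]
        strict_part_nonzero[OF new(2)]]
    by (simp add: nu_def)
  show "skew_diagram lam nu = skew_diagram lam mu - {b}"
    using diagram by (auto simp: skew_diagram_def)
qed

lemma add_min_box_bij:
  assumes lam: "strict_part lam" and mu: "strict_part mu"
    and sub: "shifted_diagram mu \<subseteq> shifted_diagram lam"
  shows "bij_betw (\<lambda>b. add_box mu (fst b)) (min_boxes (skew_diagram lam mu))
    {nu \<in> plus_one mu. contains lam nu}"
proof -
  let ?S = "skew_diagram lam mu" and ?add = "\<lambda>b. add_box mu (fst b)"
  note add = add_min_box_skew_diagram[OF lam mu sub]
  have "inj_on ?add (min_boxes ?S)"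
  proof (rule inj_onI)
    fix b c assume "b \<in> min_boxes ?S" "c \<in> min_boxes ?S" "?add b = ?add c"
    then have "insert b (shifted_diagram mu) = insert c (shifted_diagram mu)"
      and "b \<notin> shifted_diagram mu" "c \<notin> shifted_diagram mu"
      using add(1)[of b] add(1)[of c] min_boxes_subset by (auto simp: skew_diagram_def)
    then show "b = c"
      by auto
  qed
  moreover have "?add ` min_boxes ?S = {nu \<in> plus_one mu. contains lam nu}"
  proof (intro subset_antisym subsetI)
    fix nu assume "nu \<in> {nu \<in> plus_one mu. contains lam nu}"
    then obtain i j where nu: "strict_part nu" "contains lam nu" and addable: "addable_box mu (i, j)"
      and new: "shifted_diagram nu = insert (i, j) (shifted_diagram mu)"
      using plus_one_iff[OF mu] by auto
    then have "(i, j) \<in> shifted_diagram lam"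
      using contains_iff_shifted_diagram_subset[OF strict_part_nonzero[OF lam]
          strict_part_nonzero[OF nu(1)]]
      by auto
    then have min: "(i, j) \<in> min_boxes ?S"
      using addable min_boxes_skew_diagram_iff[OF lam mu sub] by simp
    have "nu = ?add (i, j)"
      using add(1)[OF min] add(2)[OF min] new plus_one_iff[OF mu]
      by (intro shifted_diagram_inject strict_part_nonzero nu(1)) (auto simp: plus_one_def)
    with min show "nu \<in> ?add ` min_boxes ?S"
      by blast
  qed (use add(2,3) in auto)
  ultimately show ?thesis
    by (simp add: bij_betw_def)
qed

lemma f_skew_plus_one:
  assumes lam: "strict_part lam" and mu: "strict_part mu" and "contains lam mu"
    and "psize mu < psize lam"
  shows "f_skew lam mu = (\<Sum>nu\<in>{nu \<in> plus_one mu. contains lam nu}. f_skew lam nu)"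
proof -
  let ?S = "skew_diagram lam mu" and ?add = "\<lambda>b. add_box mu (fst b)"
  have sub: "shifted_diagram mu \<subseteq> shifted_diagram lam"
    using \<open>contains lam mu\<close> contains_iff_shifted_diagram_subset
      strict_part_nonzero[OF lam] strict_part_nonzero[OF mu]
    by simp
  note add = add_min_box_skew_diagram[OF lam mu sub]
  have "card ?S = psize lam - psize mu"
    using sub by (simp add: skew_diagram_def card_Diff_subset card_shifted_diagram)
  then have "?S \<noteq> {}"
    using \<open>psize mu < psize lam\<close> by (intro notI) simp
  have "(\<Sum>nu\<in>{nu \<in> plus_one mu. contains lam nu}. f_skew lam nu)
      = (\<Sum>b\<in>min_boxes ?S. f_skew lam (?add b))"
    using add_min_box_bij[OF lam mu sub] by (rule sum.reindex_bij_betw[symmetric])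
  also have "\<dots> = (\<Sum>b\<in>min_boxes ?S. card (standard_fillings (?S - {b})))"
  proof (rule sum.cong[OF refl])
    fix b assume b: "b \<in> min_boxes ?S"
    have "shifted_diagram (?add b) \<subseteq> shifted_diagram lam"
      using add(1)[OF b] b min_boxes_subset sub by (auto simp: skew_diagram_def)
    then show "f_skew lam (?add b) = card (standard_fillings (?S - {b}))"
      by (simp add: f_skew_def skew_tableaux_eq_standard_fillings add(4)[OF b])
  qed
  also have "\<dots> = f_skew lam mu"
    using card_standard_fillings_min_boxes[OF _ \<open>?S \<noteq> {}\<close>]
    by (simp add: f_skew_def skew_tableaux_eq_standard_fillings[OF sub] skew_diagram_def)
  finally show ?thesis ..
qed

section \<open>The weighted sums as iterates of \<open>D + 1\<close>\<close>

lemma length_le_sum_list: "0 \<notin> set xs \<Longrightarrow> length xs \<le> sum_list (xs :: nat list)"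
  by (induction xs) (auto simp: Suc_le_eq)

lemma finite_skew_set: "finite (skew_set mu n)"
proof (rule finite_subset)
  let ?M = "psize mu + n"
  show "skew_set mu n \<subseteq> {xs. set xs \<subseteq> {0..?M} \<and> length xs \<le> ?M}"
  proof
    fix xs assume "xs \<in> skew_set mu n"
    then have "strict_part xs" "sum_list xs = ?M"
      by (auto simp: skew_set_def psize_def)
    then show "xs \<in> {xs. set xs \<subseteq> {0..?M} \<and> length xs \<le> ?M}"
      using length_le_sum_list[OF strict_part_nonzero[OF \<open>strict_part xs\<close>]]
        member_le_sum_list[of _ xs] by auto
  qed
qed (rule finite_lists_length_le, simp)

lemma finite_plus_one: "finite (plus_one mu)"
  using finite_skew_set[of mu 1] by (simp add: skew_set_def plus_one_def)

definition skew_weight :: "nat list \<Rightarrow> nat list \<Rightarrow> complex" where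
  "skew_weight lam mu =
     2 powi (int (psize lam) - int (psize mu) - int (length lam) + int (length mu))"

lemma skew_weight_mult: "skew_weight lam nu * skew_weight nu mu = skew_weight lam mu"
  unfolding skew_weight_def by (subst power_int_add[symmetric]) (simp_all add: algebra_simps)

lemma weighted_sum_skew_weight:
  "weighted_sum g mu n = (\<Sum>lam\<in>skew_set mu n. skew_weight lam mu * of_nat (f_skew lam mu) * g lam)"
  by (simp add: weighted_sum_def skew_weight_def)

lemma Dop_plus_id:
  assumes "strict_part mu"
  shows "Dop h mu + h mu = (\<Sum>nu\<in>plus_one mu. skew_weight nu mu * h nu)"
proof -
  let ?L = "{nu \<in> plus_one mu. length nu > length mu}"
    and ?E = "{nu \<in> plus_one mu. length nu = length mu}"
  have weight_L: "skew_weight nu mu = 1" if "nu \<in> ?L" for nu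
  proof -
    have "length nu = length mu + 1" "psize nu = psize mu + 1"
      using that plus_one_length[OF assms, of nu] by (auto simp: plus_one_def)
    then show ?thesis
      by (simp add: skew_weight_def)
  qed
  have weight_E: "skew_weight nu mu = 2" if "nu \<in> ?E" for nu
  proof -
    have "length nu = length mu" "psize nu = psize mu + 1"
      using that by (auto simp: plus_one_def)
    then show ?thesis
      by (simp add: skew_weight_def)
  qed
  have split: "?L \<union> ?E = plus_one mu"
    by (auto dest: plus_one_length[OF assms])
  have "(\<Sum>nu\<in>?L \<union> ?E. skew_weight nu mu * h nu)
      = (\<Sum>nu\<in>?L. skew_weight nu mu * h nu) + (\<Sum>nu\<in>?E. skew_weight nu mu * h nu)"
    using finite_plus_one[of mu] by (intro sum.union_disjoint) auto
  then have "(\<Sum>nu\<in>plus_one mu. skew_weight nu mu * h nu)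
      = (\<Sum>nu\<in>?L. skew_weight nu mu * h nu) + (\<Sum>nu\<in>?E. skew_weight nu mu * h nu)"
    by (simp only: split)
  also have "\<dots> = (\<Sum>nu\<in>?L. h nu) + (\<Sum>nu\<in>?E. 2 * h nu)"
    using weight_L weight_E by (intro arg_cong2[where f = "(+)"] sum.cong) auto
  also have "\<dots> = (\<Sum>nu\<in>?L. h nu) + 2 * (\<Sum>nu\<in>?E. h nu)"
    by (simp add: sum_distrib_left)
  finally show ?thesis
    by (simp add: Dop_def)
qed

lemma weighted_sum_0: "strict_part mu \<Longrightarrow> weighted_sum g mu 0 = g mu"
proof -
  assume mu: "strict_part mu"
  have "skew_set mu 0 = {mu}"
  proof (intro subset_antisym subsetI)
    fix lam assume "lam \<in> skew_set mu 0"
    then have lam: "strict_part lam" and "contains lam mu" "psize lam = psize mu"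
      by (auto simp: skew_set_def)
    then have "shifted_diagram mu \<subseteq> shifted_diagram lam"
      "card (shifted_diagram lam) = card (shifted_diagram mu)"
      using contains_iff_shifted_diagram_subset[OF strict_part_nonzero[OF lam]
          strict_part_nonzero[OF mu]]
      by (auto simp: card_shifted_diagram)
    then have "shifted_diagram mu = shifted_diagram lam"
      by (intro card_subset_eq) simp_all
    then show "lam \<in> {mu}"
      using shifted_diagram_inject[OF strict_part_nonzero[OF lam] strict_part_nonzero[OF mu]]
      by simp
  qed (use mu in \<open>simp add: skew_set_def contains_def\<close>)
  moreover have "skew_tableaux mu mu = {\<lambda>_. 0}"
    by (auto simp: skew_tableaux_def skew_diagram_def bij_betw_def)
  ultimately show ?thesis
    by (simp add: weighted_sum_def f_skew_def)
qed

lemma weighted_sum_Suc: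
  assumes mu: "strict_part mu"
  shows "weighted_sum g mu (Suc n) = (\<Sum>nu\<in>plus_one mu. skew_weight nu mu * weighted_sum g nu n)"
proof -
  let ?t = "\<lambda>lam nu. skew_weight lam mu * of_nat (f_skew lam nu) * g lam"
  have skew_set_plus_one: "{lam \<in> skew_set mu (Suc n). lam \<in> skew_set nu n} = skew_set nu n"
    if "nu \<in> plus_one mu" for nu
    using that by (auto simp: skew_set_def plus_one_def contains_def intro: order_trans)
  have "(\<Sum>nu\<in>plus_one mu. skew_weight nu mu * weighted_sum g nu n)
     = (\<Sum>nu\<in>plus_one mu. \<Sum>lam\<in>{lam \<in> skew_set mu (Suc n). lam \<in> skew_set nu n}. ?t lam nu)"
  proof (intro sum.cong refl)
    fix nu assume "nu \<in> plus_one mu"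
    have weight: "skew_weight nu mu * (skew_weight lam nu * c * g lam) = skew_weight lam mu * c * g lam"
      for lam c
      by (simp add: ac_simps flip: skew_weight_mult[of lam nu mu])
    show "skew_weight nu mu * weighted_sum g nu n
        = (\<Sum>lam\<in>{lam \<in> skew_set mu (Suc n). lam \<in> skew_set nu n}. ?t lam nu)"
      unfolding weighted_sum_skew_weight sum_distrib_left skew_set_plus_one[OF \<open>nu \<in> plus_one mu\<close>]
      by (simp only: weight)
  qed
  also have "\<dots> = (\<Sum>lam\<in>skew_set mu (Suc n). \<Sum>nu\<in>{nu \<in> plus_one mu. lam \<in> skew_set nu n}. ?t lam nu)"
    by (rule sum.swap_restrict[OF finite_plus_one finite_skew_set])
  also have "\<dots> = weighted_sum g mu (Suc n)"
    unfolding weighted_sum_skew_weight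
  proof (intro sum.cong refl)
    fix lam assume lam: "lam \<in> skew_set mu (Suc n)"
    then have "{nu \<in> plus_one mu. lam \<in> skew_set nu n} = {nu \<in> plus_one mu. contains lam nu}"
      by (auto simp: skew_set_def plus_one_def)
    then have "(\<Sum>nu\<in>{nu \<in> plus_one mu. lam \<in> skew_set nu n}. ?t lam nu)
        = skew_weight lam mu * of_nat (\<Sum>nu\<in>{nu \<in> plus_one mu. contains lam nu}. f_skew lam nu) * g lam"
      by (simp only: of_nat_sum sum_distrib_left sum_distrib_right)
    also have "(\<Sum>nu\<in>{nu \<in> plus_one mu. contains lam nu}. f_skew lam nu) = f_skew lam mu"
      using lam by (intro f_skew_plus_one[symmetric] mu) (auto simp: skew_set_def)
    finally show "(\<Sum>nu\<in>{nu \<in> plus_one mu. lam \<in> skew_set nu n}. ?t lam nu) = ?t lam mu" .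
  qed
  finally show ?thesis ..
qed

definition Eop :: "(nat list \<Rightarrow> complex) \<Rightarrow> nat list \<Rightarrow> complex" where
  "Eop h = (\<lambda>x. Dop h x + h x)"

lemma weighted_sum_Eop: "strict_part mu \<Longrightarrow> weighted_sum g mu n = (Eop ^^ n) g mu"
proof (induction n arbitrary: mu)
  case 0
  then show ?case by (simp add: weighted_sum_0)
next
  case (Suc n)
  have "weighted_sum g mu (Suc n) = (\<Sum>nu\<in>plus_one mu. skew_weight nu mu * (Eop ^^ n) g nu)"
    using Suc by (simp add: weighted_sum_Suc plus_one_def)
  also have "\<dots> = (Eop ^^ Suc n) g mu"
    by (simp add: Eop_def Dop_plus_id[OF Suc.prems])
  finally show ?case .
qed

section \<open>Binomial expansions and polynomiality\<close>

lemma funpow_linear: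
  fixes L :: "('a \<Rightarrow> 'b::comm_ring_1) \<Rightarrow> 'a \<Rightarrow> 'b"
  assumes lin: "\<And>a b f h. L (\<lambda>x. a * f x + b * h x) = (\<lambda>x. a * L f x + b * L h x)"
  shows "(L ^^ k) (\<lambda>x. a * f x + b * h x) = (\<lambda>x. a * (L ^^ k) f x + b * (L ^^ k) h x)"
  by (induction k) (simp_all add: lin)

lemma binomial_sum_Suc:
  fixes s :: "nat \<Rightarrow> 'a::comm_ring_1"
  shows "(\<Sum>k\<le>n. of_nat (n choose k) * c ^ (n - k) * s (Suc k))
       + c * (\<Sum>k\<le>n. of_nat (n choose k) * c ^ (n - k) * s k)
       = (\<Sum>k\<le>Suc n. of_nat (Suc n choose k) * c ^ (Suc n - k) * s k)"
proof -
  have "c * (\<Sum>k\<le>n. of_nat (n choose k) * c ^ (n - k) * s k)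
      = (\<Sum>k<Suc n. of_nat (n choose k) * c ^ (Suc n - k) * s k)"
    unfolding sum_distrib_left lessThan_Suc_atMost
    by (rule sum.cong[OF refl]) (simp add: Suc_diff_le algebra_simps)
  also have "\<dots> = c ^ Suc n * s 0 + (\<Sum>k<n. of_nat (n choose Suc k) * c ^ (n - k) * s (Suc k))"
    by (subst sum.lessThan_Suc_shift) simp
  also have "(\<Sum>k<n. of_nat (n choose Suc k) * c ^ (n - k) * s (Suc k))
      = (\<Sum>k\<le>n. of_nat (n choose Suc k) * c ^ (n - k) * s (Suc k))"
    by (simp add: lessThan_Suc_atMost[symmetric] binomial_eq_0)
  finally show ?thesis
    unfolding atMost_Suc_eq_insert_0
    by (simp add: sum.reindex sum.distrib algebra_simps)
qed

lemma funpow_plus_scalar_binomial: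
  fixes L :: "('a \<Rightarrow> 'b::comm_ring_1) \<Rightarrow> 'a \<Rightarrow> 'b"
  assumes lin: "\<And>a b f h. L (\<lambda>x. a * f x + b * h x) = (\<lambda>x. a * L f x + b * L h x)"
  shows "((\<lambda>h x. L h x + c * h x) ^^ n) h x
    = (\<Sum>k\<le>n. of_nat (n choose k) * c ^ (n - k) * (L ^^ k) h x)"
proof (induction n arbitrary: h)
  case (Suc n)
  let ?M = "\<lambda>h x. L h x + c * h x"
  have step: "(L ^^ k) (?M h) x = (L ^^ Suc k) h x + c * (L ^^ k) h x" for k
    using funpow_linear[where L = L, OF lin, where k = k and a = 1 and f = "L h" and b = c and h = h] by (simp add: funpow_Suc_right del: funpow.simps)
  have "(?M ^^ Suc n) h x = (?M ^^ n) (?M h) x"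
    by (simp add: funpow_Suc_right del: funpow.simps)
  also have "\<dots> = (\<Sum>k\<le>n. of_nat (n choose k) * c ^ (n - k) * (L ^^ Suc k) h x)
      + c * (\<Sum>k\<le>n. of_nat (n choose k) * c ^ (n - k) * (L ^^ k) h x)"
    unfolding Suc.IH step by (simp add: sum.distrib sum_distrib_left algebra_simps)
  also have "\<dots> = (\<Sum>k\<le>Suc n. of_nat (Suc n choose k) * c ^ (Suc n - k) * (L ^^ k) h x)"
    by (rule binomial_sum_Suc)
  finally show ?case .
qed simp

lemma Dop_linear: "Dop (\<lambda>x. a * f x + b * h x) = (\<lambda>x. a * Dop f x + b * Dop h x)"
  by (rule ext) (simp add: Dop_def sum.distrib sum_distrib_left algebra_simps)

lemma Eop_linear: "Eop (\<lambda>x. a * f x + b * h x) = (\<lambda>x. a * Eop f x + b * Eop h x)"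
  by (rule ext) (simp add: Eop_def Dop_linear algebra_simps)

lemma Eop_funpow_binomial:
  "(Eop ^^ n) h x = (\<Sum>k\<le>n. of_nat (n choose k) * (Dop ^^ k) h x)"
proof -
  have "Eop = (\<lambda>h x. Dop h x + 1 * h x)"
    by (simp add: Eop_def fun_eq_iff)
  then show ?thesis
    using funpow_plus_scalar_binomial[where L = Dop, OF Dop_linear, where c = 1 and n = n and h = h and x = x] by simp
qed

lemma Dop_funpow_binomial:
  "(Dop ^^ n) h x = (\<Sum>k\<le>n. (-1) ^ (n - k) * of_nat (n choose k) * (Eop ^^ k) h x)"
proof -
  have "Dop = (\<lambda>h x. Eop h x + (-1) * h x)"
    by (simp add: Eop_def fun_eq_iff)
  then show ?thesis
    using funpow_plus_scalar_binomial[where L = Eop, OF Eop_linear, where c = "-1" and n = n and h = h and x = x] by (simp add: ac_simps)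
qed

definition binomial_poly :: "nat \<Rightarrow> 'a::field_char_0 poly" where
  "binomial_poly k = smult (1 / fact k) (\<Prod>i<k. [:- of_nat i, 1:])"

lemma poly_binomial_poly: "poly (binomial_poly k) (of_nat n) = of_nat (n choose k)"
proof -
  have "poly (binomial_poly k) (of_nat n) = (\<Prod>i<k. of_nat n - of_nat i) / fact k"
    by (simp add: binomial_poly_def poly_prod)
  also have "\<dots> = of_nat n gchoose k"
    by (simp add: gbinomial_prod_rev atLeast0LessThan)
  finally show ?thesis
    by (simp add: binomial_gbinomial)
qed

lemma degree_binomial_poly: "degree (binomial_poly k) \<le> k"
proof -
  have "degree (\<Prod>i<k. [:- of_nat i, 1::'a:]) \<le> sum (degree \<circ> (\<lambda>i. [:- of_nat i, 1::'a:])) {..<k}"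
    by (rule degree_prod_sum_le) simp
  then show ?thesis
    unfolding binomial_poly_def using degree_smult_le order_trans by fastforce
qed

lemma binomial_transform_poly:
  fixes d :: "nat \<Rightarrow> 'a::field_char_0"
  assumes "\<And>k. r \<le> k \<Longrightarrow> d k = 0"
  shows "\<exists>p. degree p \<le> r - 1 \<and> (\<forall>n. (\<Sum>k\<le>n. of_nat (n choose k) * d k) = poly p (of_nat n))"
proof (intro exI conjI allI)
  let ?p = "\<Sum>k<r. smult (d k) (binomial_poly k)"
  show "degree ?p \<le> r - 1"
  proof (rule degree_sum_le)
    fix k assume "k \<in> {..<r}"
    then show "degree (smult (d k) (binomial_poly k)) \<le> r - 1"
      using degree_smult_le[of "d k" "binomial_poly k"] degree_binomial_poly[of k, where 'a = 'a]
      by simp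
  qed simp
  fix n
  have "(\<Sum>k\<le>n. of_nat (n choose k) * d k) = (\<Sum>k\<in>{..n} \<union> {..<r}. of_nat (n choose k) * d k)"
    by (intro sum.mono_neutral_left) (auto simp: binomial_eq_0)
  also have "\<dots> = (\<Sum>k<r. of_nat (n choose k) * d k)"
    by (intro sum.mono_neutral_right) (auto simp: assms not_less)
  also have "\<dots> = poly ?p (of_nat n)"
    by (simp add: poly_sum poly_binomial_poly mult.commute)
  finally show "(\<Sum>k\<le>n. of_nat (n choose k) * d k) = poly ?p (of_nat n)" .
qed

lemma Dop_funpow_vanishing:
  assumes "\<And>y. strict_part y \<Longrightarrow> h y = 0" "strict_part x"
  shows "(Dop ^^ j) h x = 0"
  using assms(2)
proof (induction j arbitrary: x)
  case (Suc j)
  then show ?case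
    by (simp add: Dop_def plus_one_def)
qed (simp add: assms(1))

theorem theorem2p3:
  fixes g :: "nat list \<Rightarrow> complex" and mu :: "nat list"
  assumes "strict_part mu"
  shows "(\<forall>n. weighted_sum g mu n
               = (\<Sum>k=0..n. of_nat (n choose k) * (Dop ^^ k) g mu))
       \<and> (\<forall>n. (Dop ^^ n) g mu
               = (\<Sum>k=0..n. (-1) ^ (n + k) * of_nat (n choose k) * weighted_sum g mu k))
       \<and> (\<forall>r::nat. r > 0 \<longrightarrow> (\<forall>lam. strict_part lam \<longrightarrow> (Dop ^^ r) g lam = 0)
            \<longrightarrow> (\<exists>p :: complex poly. degree p \<le> r - 1
                   \<and> (\<forall>n. weighted_sum g mu n = poly p (of_nat n))))"
proof (intro conjI allI impI)
  fix n
  show "weighted_sum g mu n = (\<Sum>k=0..n. of_nat (n choose k) * (Dop ^^ k) g mu)"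
    using assms by (simp add: weighted_sum_Eop Eop_funpow_binomial atLeast0AtMost)
  have "(-1) ^ (n + k) = (-1 :: complex) ^ (n - k)" if "k \<le> n" for k
    using that by (rule neg_one_power_add_eq_neg_one_power_diff)
  then show "(Dop ^^ n) g mu
      = (\<Sum>k=0..n. (-1) ^ (n + k) * of_nat (n choose k) * weighted_sum g mu k)"
    using assms by (simp add: Dop_funpow_binomial weighted_sum_Eop atLeast0AtMost)
next
  fix r :: nat
  assume "\<forall>lam. strict_part lam \<longrightarrow> (Dop ^^ r) g lam = 0"
  then have "(Dop ^^ k) g mu = 0" if "r \<le> k" for k
  proof -
    have "(Dop ^^ (k - r + r)) g mu = (Dop ^^ (k - r)) ((Dop ^^ r) g) mu"
      by (simp add: funpow_add)
    then show ?thesis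
      using Dop_funpow_vanishing[of "(Dop ^^ r) g" mu "k - r"] assms that \<open>\<forall>lam. _\<close> by simp
  qed
  then show "\<exists>p :: complex poly. degree p \<le> r - 1 \<and> (\<forall>n. weighted_sum g mu n = poly p (of_nat n))"
    using binomial_transform_poly[of r "\<lambda>k. (Dop ^^ k) g mu"] assms
    by (simp add: weighted_sum_Eop Eop_funpow_binomial)
qed

end
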